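(* Assume $\rho_\alpha^{\mathrm{dir}}<1$, let $\theta^\star$ be the unique projected Bellman fixed point, and let $x_k:=\theta_k-\theta^\star$. Then for each $k\ge0$ there exists an $\mathcal F_k$-measurable stochastic policy $\mu_k$ such that \[ x_{k+1}=A_{\mu_k}x_k+\alpha b_k+\alpha\xi_{k+1}\quad\text{for all }k\ge0, \] where $\mathbb E[\xi_{k+1}\mid\mathcal F_k]=0$. Moreover, \[ b_k=\Phi^\top(e_{X_k}e_{X_k}^\top-D)\Big(R+\gamma PV_{\theta^\star}-\Phi\theta^\star+(\gamma P\Pi^{\mu_k}-I)\Phi x_k\Big). \]
   Context: Consider a finite discounted MDP with state space $\mathcal S=\{1,\dots,|\mathcal S|\}$, action space $\mathcal A=\{1,\dots,|\mathcal A|\}$, transition probabilities $P(s'\mid s,a)$, real rewards $r(s,a,s')$, expected reward $R(s,a)=\sum_{s'}P(s'\mid s,a)r(s,a,s')$, and discount factor $\gamma\in(0,1)$. State-action vectors are ordered as $(1,1),(2,1),\dots,(|\mathcal S|,1),(1,2),\dots$. The matrix $P$ has rows $P(\cdot\mid s,a)$, and $R$ has entries $R(s,a)$. For a state-action pair $i$, $e_i\in\mathbb R^{|\mathcal S||\mathcal A|}$ is the corresponding coordinate vector. A stochastic policy is a map $\mu:\mathcal S\to\Delta_{|\mathcal A|}$. The matrix $\Pi^\mu\in\mathbb R^{|\mathcal S|\times|\mathcal S||\mathcal A|}$ has entry $\mu(a\mid s)$ at row $s$, column $(s,a)$, and zeros elsewhere. The set $\Theta$ is the set of deterministic stationary policies.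 The feature matrix $\Phi$ has full column rank and rows $\phi(s,a)^\top$. Define $V_\theta(s):=\max_a\phi(s,a)^\top\theta$. The step size is $\alpha\in(0,1)$. Markovian observations: fix a behavior policy $b(a\mid s)$. The trajectory evolves as $s_{k+1}\sim P(\cdot\mid s_k,a_k)$, $r_{k+1}=r(s_k,a_k,s_{k+1})$, $a_{k+1}\sim b(\cdot\mid s_{k+1})$. The chain $X_k=(s_k,a_k)$ has a stationary distribution $d$ with $d>0$ everywhere, and $D=\mathrm{diag}(d)$. The filtration is $\mathcal F_k=\sigma(\theta_0,X_0,r_1,X_1,\dots,r_k,X_k)$, and $\theta_0$ is deterministic. The update is $\theta_{k+1}=\theta_k+\alpha\phi(X_k)\big(r_{k+1}+\gamma\max_u\phi(s_{k+1},u)^\top\theta_k-\phi(X_k)^\top\theta_k\big)$. Define $\delta(\theta):=R+\gamma PV_\theta-\Phi\theta$, \[ \xi_{k+1}:=\phi(X_k)\big(r_{k+1}+\gamma\max_u\phi(s_{k+1},u)^\top\theta_k-\phi(X_k)^\top\theta_k-e_{X_k}^\top\delta(\theta_k)\big), \] and $b_k:=\Phi^\top(e_{X_k}e_{X_k}^\top-D)\delta(\theta_k)$. Define $g(\theta):=\Phi^\top D\delta(\theta)$; a projected Bellman fixed point is a $\theta^\star$ with $g(\theta^\star)=0$. Define $A_\mu:=I-\alpha\Phi^\top D\Phi+\alpha\gamma\Phi^\top DP\Pi^\mu\Phi$, and let $\rho_\alpha^{\mathrm{dir}}$ be the joint spectral radius $\lim_k\max_{\pi_i\in\Theta}\|A_{\pi_k}\cdots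 A_{\pi_1}\|^{1/k}$. When $\rho_\alpha^{\mathrm{dir}}<1$, a unique projected Bellman fixed point exists. *)

theory Defs
  imports "HOL-Probability.Probability"
begin

(* Phi :: real^'d^('s\<times>'u)  has rows phi(s,a)^T.
   P   :: real^'s^('s\<times>'u)  has rows P(.|s,a). *)

definition stoch_policy :: "('s::finite \<Rightarrow> 'u::finite \<Rightarrow> real) \<Rightarrow> bool" where
  "stoch_policy mu \<longleftrightarrow> (\<forall>s a. 0 \<le> mu s a) \<and> (\<forall>s. (\<Sum>a\<in>UNIV. mu s a) = 1)"

definition det_policy :: "('s::finite \<Rightarrow> 'u::finite) \<Rightarrow> 's \<Rightarrow> 'u \<Rightarrow> real" where
  "det_policy pol s a = (if pol s = a then 1 else 0)"

definition Rvec :: "real^'s^('s::finite \<times> 'u::finite) \<Rightarrow> ('s \<Rightarrow> 'u \<Rightarrow> 's \<Rightarrow> real) \<Rightarrow> real^('s \<times> 'u)" where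
  "Rvec P r = (\<chi> i. \<Sum>s'\<in>UNIV. P $ i $ s' * r (fst i) (snd i) s')"

definition Vth :: "real^'d^('s::finite \<times> 'u::finite) \<Rightarrow> real^'d \<Rightarrow> real^'s" where
  "Vth Phi th = (\<chi> s. Max (range (\<lambda>a. (Phi $ (s,a)) \<bullet> th)))"

definition PiM :: "('s::finite \<Rightarrow> 'u::finite \<Rightarrow> real) \<Rightarrow> real^('s \<times> 'u)^'s" where
  "PiM mu = (\<chi> s. \<chi> j. if fst j = s then mu s (snd j) else 0)"

definition diagM :: "real^'n::finite \<Rightarrow> real^'n^'n" where
  "diagM d = (\<chi> i j. if i = j then d $ i else 0)"

definition outerE :: "'n::finite \<Rightarrow> real^'n^'n" where
  "outerE x = (\<chi> i j. if i = x \<and> j = x then 1 else 0)"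

definition deltaB :: "real^('s::finite \<times> 'u::finite) \<Rightarrow> real^'s^('s \<times> 'u) \<Rightarrow> real
     \<Rightarrow> real^'d^('s \<times> 'u) \<Rightarrow> real^'d \<Rightarrow> real^('s \<times> 'u)" where
  "deltaB R P \<gamma> Phi th = R + \<gamma> *\<^sub>R (P *v Vth Phi th) - Phi *v th"

definition gB :: "real^('s::finite \<times> 'u::finite) \<Rightarrow> real^'s^('s \<times> 'u) \<Rightarrow> real
     \<Rightarrow> real^'d^('s \<times> 'u) \<Rightarrow> real^('s \<times> 'u) \<Rightarrow> real^'d \<Rightarrow> real^'d" where
  "gB R P \<gamma> Phi d th = transpose Phi *v (diagM d *v deltaB R P \<gamma> Phi th)"

definition Amu :: "real \<Rightarrow> real \<Rightarrow> real^'d^('s::finite \<times> 'u::finite) \<Rightarrow> real^('s \<times> 'u)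
     \<Rightarrow> real^'s^('s \<times> 'u) \<Rightarrow> ('s \<Rightarrow> 'u \<Rightarrow> real) \<Rightarrow> real^'d^'d" where
  "Amu \<alpha> \<gamma> Phi d P mu = mat 1 - \<alpha> *\<^sub>R (transpose Phi ** diagM d ** Phi)
      + (\<alpha> * \<gamma>) *\<^sub>R (transpose Phi ** diagM d ** P ** PiM mu ** Phi)"

(* joint spectral radius over deterministic stationary policies:
   lim_k max_{pi_1..pi_k} ||A_{pi_k} ... A_{pi_1}||^(1/k), k \<ge> 1
   (any matrix norm gives the same value; we use the norm of real^'d^'d) *)
definition rho_dir :: "real \<Rightarrow> real \<Rightarrow> real^'d::finite^('s::finite \<times> 'u::finite) \<Rightarrow> real^('s \<times> 'u)
     \<Rightarrow> real^'s^('s \<times> 'u) \<Rightarrow> real" where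
  "rho_dir \<alpha> \<gamma> Phi d P =
     lim (\<lambda>k. Max ((\<lambda>ps. norm (foldr (\<lambda>pol M. Amu \<alpha> \<gamma> Phi d P (det_policy pol) ** M) ps (mat 1)))
                     ` {ps :: ('s \<Rightarrow> 'u) list. length ps = Suc k}) powr (1 / real (Suc k)))"

(* iterates theta_k(omega) of Q-learning with linear function approximation;
   X k = (s_k,a_k), rw (Suc k) = r_{k+1} *)
fun theta_it :: "real \<Rightarrow> real \<Rightarrow> real^'d^('s::finite \<times> 'u::finite) \<Rightarrow> real^'d
     \<Rightarrow> (nat \<Rightarrow> 'w \<Rightarrow> 's \<times> 'u) \<Rightarrow> (nat \<Rightarrow> 'w \<Rightarrow> real) \<Rightarrow> nat \<Rightarrow> 'w \<Rightarrow> real^'d" where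
  "theta_it \<alpha> \<gamma> Phi th0 X rw 0 \<omega> = th0"
| "theta_it \<alpha> \<gamma> Phi th0 X rw (Suc k) \<omega> =
     (let th = theta_it \<alpha> \<gamma> Phi th0 X rw k \<omega>; x = X k \<omega>; s' = fst (X (Suc k) \<omega>)
      in th + (\<alpha> * (rw (Suc k) \<omega> + \<gamma> * Max (range (\<lambda>u. (Phi $ (s',u)) \<bullet> th)) - (Phi $ x) \<bullet> th))
              *\<^sub>R (Phi $ x))"

definition xi_noise :: "real^('s::finite \<times> 'u::finite) \<Rightarrow> real^'s^('s \<times> 'u) \<Rightarrow> real \<Rightarrow> real
     \<Rightarrow> real^'d^('s \<times> 'u) \<Rightarrow> real^'d \<Rightarrow> (nat \<Rightarrow> 'w \<Rightarrow> 's \<times> 'u) \<Rightarrow> (nat \<Rightarrow> 'w \<Rightarrow> real)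
     \<Rightarrow> nat \<Rightarrow> 'w \<Rightarrow> real^'d" where
  "xi_noise R P \<alpha> \<gamma> Phi th0 X rw k \<omega> =
     (let th = theta_it \<alpha> \<gamma> Phi th0 X rw k \<omega>; x = X k \<omega>; s' = fst (X (Suc k) \<omega>)
      in (rw (Suc k) \<omega> + \<gamma> * Max (range (\<lambda>u. (Phi $ (s',u)) \<bullet> th)) - (Phi $ x) \<bullet> th
           - deltaB R P \<gamma> Phi th $ x) *\<^sub>R (Phi $ x))"
(* note: xi_noise ... k is xi_{k+1} *)

definition b_bias :: "real^('s::finite \<times> 'u::finite) \<Rightarrow> real^'s^('s \<times> 'u) \<Rightarrow> real \<Rightarrow> real
     \<Rightarrow> real^'d^('s \<times> 'u) \<Rightarrow> real^('s \<times> 'u) \<Rightarrow> real^'d \<Rightarrow> (nat \<Rightarrow> 'w \<Rightarrow> 's \<times> 'u)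
     \<Rightarrow> (nat \<Rightarrow> 'w \<Rightarrow> real) \<Rightarrow> nat \<Rightarrow> 'w \<Rightarrow> real^'d" where
  "b_bias R P \<alpha> \<gamma> Phi d th0 X rw k \<omega> =
     transpose Phi *v ((outerE (X k \<omega>) - diagM d) *v deltaB R P \<gamma> Phi (theta_it \<alpha> \<gamma> Phi th0 X rw k \<omega>))"

(* F_k = sigma(theta_0, X_0, r_1, X_1, ..., r_k, X_k); theta_0 is deterministic *)
definition filt :: "'w measure \<Rightarrow> (nat \<Rightarrow> 'w \<Rightarrow> 's \<times> 'u) \<Rightarrow> (nat \<Rightarrow> 'w \<Rightarrow> real) \<Rightarrow> nat \<Rightarrow> 'w measure" where
  "filt M X rw k = sigma (space M)
     ({X i -` A \<inter> space M | i A. i \<le> k} \<union>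
      {rw i -` B \<inter> space M | i B. 1 \<le> i \<and> i \<le> k \<and> B \<in> sets borel})"

definition filt_next :: "'w measure \<Rightarrow> (nat \<Rightarrow> 'w \<Rightarrow> 's \<times> 'u) \<Rightarrow> (nat \<Rightarrow> 'w \<Rightarrow> real) \<Rightarrow> nat \<Rightarrow> 'w measure" where
  "filt_next M X rw k = sigma (space M)
     ({X i -` A \<inter> space M | i A. i \<le> k} \<union>
      {rw i -` B \<inter> space M | i B. 1 \<le> i \<and> i \<le> Suc k \<and> B \<in> sets borel} \<union>
      {(\<lambda>\<omega>. fst (X (Suc k) \<omega>)) -` S \<inter> space M | S. True})"

end

theory Submission
  imports Defs
begin

(* The policy mu_k mixes the greedy policies of theta_k and theta* so that
   Pi^mu_k Phi (theta_k - theta* ) = V_theta_k - V_theta*: the difference of the two maxima lies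
   between the averages of Phi (theta_k - theta* ) under the two greedy policies, so a convex
   combination of them attains it. This mean-value identity gives
   delta(theta_k) = delta(theta* ) + (gamma P Pi^mu_k - I) Phi x_k, and together with g(theta* ) = 0
   the update splits into A_mu_k x_k + alpha b_k + alpha xi_(k+1). The noise component is a finite sum
   over next states s' of bounded F_k-measurable coefficients times 1{s_(k+1) = s'} - P(s'|X_k), so
   its conditional expectation vanishes by the transition law; boundedness (hence integrability)
   holds because theta_k is built in k steps from finitely many rewards and features. *)

definition greedy_dist :: "('a::finite \<Rightarrow> real) \<Rightarrow> 'a \<Rightarrow> real" where
  "greedy_dist f a =
     (if f a = Max (range f) then 1 else 0) / (\<Sum>b\<in>UNIV. if f b = Max (range f) then 1 else 0)"

lemma
  fixes f :: "'a::finite \<Rightarrow> real"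
  shows greedy_dist_nonneg: "0 \<le> greedy_dist f a"
    and sum_greedy_dist: "(\<Sum>a\<in>UNIV. greedy_dist f a) = 1"
    and greedy_dist_expectation: "(\<Sum>a\<in>UNIV. greedy_dist f a * f a) = Max (range f)"
proof -
  define n where "n = (\<Sum>b\<in>UNIV. if f b = Max (range f) then 1 else (0::real))"
  have "Max (range f) \<in> range f"
    by (rule Max_in) auto
  then obtain a0 where "f a0 = Max (range f)"
    by (metis rangeE)
  then have "1 \<le> n"
    unfolding n_def by (intro order_trans[OF _ member_le_sum[of a0]]) auto
  then show "0 \<le> greedy_dist f a" and sum1: "(\<Sum>a\<in>UNIV. greedy_dist f a) = 1"
    by (simp_all add: greedy_dist_def n_def[symmetric] sum_divide_distrib[symmetric])
  have "(\<Sum>a\<in>UNIV. greedy_dist f a * f a) = (\<Sum>a\<in>UNIV. greedy_dist f a * Max (range f))"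
    by (rule sum.cong) (simp_all add: greedy_dist_def)
  also have "\<dots> = Max (range f)"
    by (simp add: sum_distrib_right[symmetric] sum1)
  finally show "(\<Sum>a\<in>UNIV. greedy_dist f a * f a) = Max (range f)" .
qed

lemma expectation_le_Max:
  fixes w g :: "'a::finite \<Rightarrow> real"
  assumes "\<And>a. 0 \<le> w a" and "(\<Sum>a\<in>UNIV. w a) = 1"
  shows "(\<Sum>a\<in>UNIV. w a * g a) \<le> Max (range g)"
proof -
  have "(\<Sum>a\<in>UNIV. w a * g a) \<le> (\<Sum>a\<in>UNIV. w a * Max (range g))"
    by (intro sum_mono mult_left_mono) (simp_all add: assms)
  then show ?thesis
    by (simp add: sum_distrib_right[symmetric] assms)
qed

(* v \<le> Max f - Max g \<le> u, so for u = v any weight l would do. *)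
definition max_diff_dist :: "('a::finite \<Rightarrow> real) \<Rightarrow> ('a \<Rightarrow> real) \<Rightarrow> 'a \<Rightarrow> real" where
  "max_diff_dist f g a =
     (let u = (\<Sum>b\<in>UNIV. greedy_dist f b * (f b - g b));
          v = (\<Sum>b\<in>UNIV. greedy_dist g b * (f b - g b));
          l = (if u = v then 1 else (Max (range f) - Max (range g) - v) / (u - v))
      in l * greedy_dist f a + (1 - l) * greedy_dist g a)"

lemma
  fixes f g :: "'a::finite \<Rightarrow> real"
  shows max_diff_dist_nonneg: "0 \<le> max_diff_dist f g a"
    and sum_max_diff_dist: "(\<Sum>a\<in>UNIV. max_diff_dist f g a) = 1"
    and max_diff_dist_expectation:
      "(\<Sum>a\<in>UNIV. max_diff_dist f g a * (f a - g a)) = Max (range f) - Max (range g)"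
proof -
  define u where "u = (\<Sum>b\<in>UNIV. greedy_dist f b * (f b - g b))"
  define v where "v = (\<Sum>b\<in>UNIV. greedy_dist g b * (f b - g b))"
  define m where "m = Max (range f) - Max (range g)"
  define l where "l = (if u = v then 1 else (m - v) / (u - v))"
  have w: "max_diff_dist f g a = l * greedy_dist f a + (1 - l) * greedy_dist g a" for a
    unfolding max_diff_dist_def u_def v_def l_def m_def Let_def ..
  have "u = Max (range f) - (\<Sum>b\<in>UNIV. greedy_dist f b * g b)"
    by (simp add: u_def right_diff_distrib sum_subtractf greedy_dist_expectation)
  with expectation_le_Max[OF greedy_dist_nonneg sum_greedy_dist, of f g]
  have "m \<le> u"
    unfolding m_def by linarith
  moreover have "v = (\<Sum>b\<in>UNIV. greedy_dist g b * f b) - Max (range g)"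
    by (simp add: v_def right_diff_distrib sum_subtractf greedy_dist_expectation)
  with expectation_le_Max[OF greedy_dist_nonneg sum_greedy_dist, of g f]
  have "v \<le> m"
    unfolding m_def by linarith
  ultimately have l: "0 \<le> l" "l \<le> 1" "l * u + (1 - l) * v = m"
    unfolding l_def by (auto simp: field_simps)
  show "0 \<le> max_diff_dist f g a"
    unfolding w using l by (intro add_nonneg_nonneg mult_nonneg_nonneg greedy_dist_nonneg) auto
  show "(\<Sum>a\<in>UNIV. max_diff_dist f g a) = 1"
    unfolding w by (simp add: sum.distrib sum_distrib_left[symmetric] sum_greedy_dist)
  show "(\<Sum>a\<in>UNIV. max_diff_dist f g a * (f a - g a)) = Max (range f) - Max (range g)"
    unfolding w m_def[symmetric] l(3)[symmetric] u_def v_def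
    by (simp add: sum.distrib sum_distrib_left distrib_right mult.assoc)
qed

lemma borel_measurable_greedy_dist [measurable]:
  fixes f :: "'w \<Rightarrow> 'a::finite \<Rightarrow> real"
  assumes "\<And>b. (\<lambda>\<omega>. f \<omega> b) \<in> borel_measurable N"
  shows "(\<lambda>\<omega>. greedy_dist (f \<omega>) a) \<in> borel_measurable N"
  unfolding greedy_dist_def using assms by measurable

lemma borel_measurable_max_diff_dist [measurable]:
  fixes f g :: "'w \<Rightarrow> 'a::finite \<Rightarrow> real"
  assumes "\<And>b. (\<lambda>\<omega>. f \<omega> b) \<in> borel_measurable N" "\<And>b. (\<lambda>\<omega>. g \<omega> b) \<in> borel_measurable N"
  shows "(\<lambda>\<omega>. max_diff_dist (f \<omega>) (g \<omega>) a) \<in> borel_measurable N"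
  unfolding max_diff_dist_def Let_def using assms by measurable

definition mean_value_policy ::
    "real^'d::finite^('s::finite \<times> 'u::finite) \<Rightarrow> real^'d \<Rightarrow> real^'d \<Rightarrow> 's \<Rightarrow> 'u \<Rightarrow> real" where
  "mean_value_policy Phi ts th s = max_diff_dist (\<lambda>a. Phi $ (s,a) \<bullet> th) (\<lambda>a. Phi $ (s,a) \<bullet> ts)"

lemma stoch_policy_mean_value_policy: "stoch_policy (mean_value_policy Phi ts th)"
  by (simp add: stoch_policy_def mean_value_policy_def max_diff_dist_nonneg sum_max_diff_dist)

lemma sum_UNIV_prod: "(\<Sum>j\<in>UNIV. f j) = (\<Sum>x\<in>UNIV. \<Sum>y\<in>UNIV. f (x,y))"
  by (subst UNIV_Times_UNIV[symmetric]) (rule sum.cartesian_product')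

lemma PiM_mult_vec_nth: "(PiM mu *v v) $ s = (\<Sum>a\<in>UNIV. mu s a * v $ (s,a))"
proof -
  have "(PiM mu *v v) $ s = (\<Sum>j\<in>UNIV. (if fst j = s then mu s (snd j) else 0) * v $ j)"
    by (simp add: matrix_vector_mult_def PiM_def)
  also have "\<dots> = (\<Sum>s'\<in>UNIV. \<Sum>a\<in>UNIV. (if s' = s then mu s a else 0) * v $ (s',a))"
    by (subst sum_UNIV_prod) (simp cong: if_cong)
  also have "\<dots> = (\<Sum>a\<in>UNIV. mu s a * v $ (s,a))"
    by (subst sum.swap) (simp add: if_distrib[of "\<lambda>x. x * _"] cong: if_cong)
  finally show ?thesis .
qed

lemma PiM_mean_value_policy:
  "PiM (mean_value_policy Phi ts th) *v (Phi *v (th - ts)) = Vth Phi th - Vth Phi ts"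
  unfolding vec_eq_iff PiM_mult_vec_nth
  by (simp add: Vth_def mean_value_policy_def inner_diff_right
      max_diff_dist_expectation[symmetric] matrix_vector_mul_component)

lemma borel_measurable_mean_value_policy [measurable]:
  "th \<in> borel_measurable N \<Longrightarrow> (\<lambda>\<omega>. mean_value_policy Phi ts (th \<omega>) s a) \<in> borel_measurable N"
  unfolding mean_value_policy_def by measurable

lemma transpose_mult_outerE: "transpose Phi *v (outerE i *v v) = (v $ i) *\<^sub>R (Phi $ i)"
proof -
  have "outerE i *v v = (\<chi> j. if j = i then v $ i else 0)"
    by (simp add: vec_eq_iff matrix_vector_mult_def outerE_def if_distrib[of "\<lambda>x. x * _"] cong: if_cong)
  then show ?thesis
    by (simp add: vec_eq_iff matrix_vector_mult_def transpose_def if_distrib[of "\<lambda>x. _ * x"] cong: if_cong)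
qed

lemma Amu_mult_vec:
  "Amu \<alpha> \<gamma> Phi d P mu *v y
     = y + \<alpha> *\<^sub>R (transpose Phi *v (diagM d *v ((\<gamma> *\<^sub>R (P ** PiM mu) - mat 1) *v (Phi *v y))))"
  by (simp add: Amu_def algebra_simps matrix_vector_mul_assoc[symmetric]
      scaleR_matrix_vector_assoc[symmetric] del: transpose_matrix_vector)

context
  fixes R :: "real^('s::finite \<times> 'u::finite)" and P :: "real^'s^('s \<times> 'u)" and \<gamma> :: real
    and Phi :: "real^'d::finite^('s \<times> 'u)" and mu :: "'s \<Rightarrow> 'u \<Rightarrow> real" and th ts :: "real^'d"
  assumes PiM_mu: "PiM mu *v (Phi *v (th - ts)) = Vth Phi th - Vth Phi ts"
begin

lemma deltaB_linearization:
  "deltaB R P \<gamma> Phi th = deltaB R P \<gamma> Phi ts + (\<gamma> *\<^sub>R (P ** PiM mu) - mat 1) *v (Phi *v (th - ts))"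
proof -
  have "deltaB R P \<gamma> Phi th - deltaB R P \<gamma> Phi ts
      = \<gamma> *\<^sub>R (P *v (Vth Phi th - Vth Phi ts)) - Phi *v (th - ts)"
    by (simp add: deltaB_def algebra_simps)
  also have "\<dots> = (\<gamma> *\<^sub>R (P ** PiM mu) - mat 1) *v (Phi *v (th - ts))"
    unfolding PiM_mu[symmetric]
    by (simp add: algebra_simps matrix_vector_mul_assoc[symmetric]
        scaleR_matrix_vector_assoc[symmetric])
  finally show ?thesis
    by (simp add: algebra_simps)
qed

lemma qlearning_step_decomposition:
  assumes "gB R P \<gamma> Phi d ts = 0"
  shows "th + (\<alpha> * c) *\<^sub>R Phi $ x - ts
     = Amu \<alpha> \<gamma> Phi d P mu *v (th - ts)
       + \<alpha> *\<^sub>R (transpose Phi *v ((outerE x - diagM d) *v deltaB R P \<gamma> Phi th))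
       + \<alpha> *\<^sub>R ((c - deltaB R P \<gamma> Phi th $ x) *\<^sub>R Phi $ x)"
proof -
  have g: "transpose Phi *v (diagM d *v ((\<gamma> *\<^sub>R (P ** PiM mu) - mat 1) *v (Phi *v (th - ts))))
      = gB R P \<gamma> Phi d th"
    using assms
    by (simp add: gB_def deltaB_linearization matrix_vector_right_distrib
        del: transpose_matrix_vector)
  have b: "transpose Phi *v ((outerE x - diagM d) *v deltaB R P \<gamma> Phi th)
      = deltaB R P \<gamma> Phi th $ x *\<^sub>R Phi $ x - gB R P \<gamma> Phi d th"
    by (simp add: matrix_vector_mult_diff_rdistrib matrix_vector_mult_diff_distrib
        transpose_mult_outerE gB_def del: transpose_matrix_vector)
  show ?thesis
    unfolding Amu_mult_vec g b by (simp add: algebra_simps)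
qed

end

lemma (in finite_measure_subalgebra) real_cond_exp_centered_sum:
  fixes H Y Q :: "'i \<Rightarrow> 'a \<Rightarrow> real"
  assumes "finite I"
    and H: "\<And>i. H i \<in> borel_measurable F" "\<And>i \<omega>. \<omega> \<in> space M \<Longrightarrow> \<bar>H i \<omega>\<bar> \<le> KH"
    and Y: "\<And>i. Y i \<in> borel_measurable M" "\<And>i \<omega>. \<omega> \<in> space M \<Longrightarrow> \<bar>Y i \<omega>\<bar> \<le> KY"
    and Q: "\<And>i. Q i \<in> borel_measurable F" "\<And>i \<omega>. \<omega> \<in> space M \<Longrightarrow> \<bar>Q i \<omega>\<bar> \<le> KQ"
    and cond_exp_Y: "\<And>i. AE \<omega> in M. real_cond_exp M F (Y i) \<omega> = Q i \<omega>"
  shows "AE \<omega> in M. real_cond_exp M F (\<lambda>\<omega>. \<Sum>i\<in>I. H i \<omega> * (Y i \<omega> - Q i \<omega>)) \<omega> = 0"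
proof -
  have H_M: "H i \<in> borel_measurable M" and Q_M: "Q i \<in> borel_measurable M" for i
    using measurable_from_subalg[OF subalg] H(1) Q(1) by blast+
  have bounded_product: "\<bar>H i \<omega> * Z \<omega>\<bar> \<le> \<bar>KH\<bar> * \<bar>K\<bar>"
    if "\<omega> \<in> space M" "\<And>\<omega>. \<omega> \<in> space M \<Longrightarrow> \<bar>Z \<omega>\<bar> \<le> K" for i Z K \<omega>
    unfolding abs_mult using H(2)[of \<omega> i] that by (intro mult_mono) fastforce+
  have int_HY: "integrable M (\<lambda>\<omega>. H i \<omega> * Y i \<omega>)" for i
    using H_M Y bounded_product[of _ "Y i" KY]
    by (intro integrable_const_bound[where B="\<bar>KH\<bar> * \<bar>KY\<bar>"] AE_I2) auto
  have int_HQ: "integrable M (\<lambda>\<omega>. H i \<omega> * Q i \<omega>)" for i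
    using H_M Q_M Q(2) bounded_product[of _ "Q i" KQ]
    by (intro integrable_const_bound[where B="\<bar>KH\<bar> * \<bar>KQ\<bar>"] AE_I2) auto
  have summand: "AE \<omega> in M. real_cond_exp M F (\<lambda>\<omega>. H i \<omega> * (Y i \<omega> - Q i \<omega>)) \<omega> = 0" for i
  proof -
    have "AE \<omega> in M. real_cond_exp M F (\<lambda>\<omega>. H i \<omega> * Y i \<omega> - H i \<omega> * Q i \<omega>) \<omega>
        = real_cond_exp M F (\<lambda>\<omega>. H i \<omega> * Y i \<omega>) \<omega> - real_cond_exp M F (\<lambda>\<omega>. H i \<omega> * Q i \<omega>) \<omega>"
      by (rule real_cond_exp_diff[OF int_HY int_HQ])
    moreover have "AE \<omega> in M. real_cond_exp M F (\<lambda>\<omega>. H i \<omega> * Y i \<omega>) \<omega> = H i \<omega> * real_cond_exp M F (Y i) \<omega>"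
      by (rule real_cond_exp_mult[OF H(1) Y(1) int_HY])
    moreover have "AE \<omega> in M. real_cond_exp M F (\<lambda>\<omega>. H i \<omega> * Q i \<omega>) \<omega> = H i \<omega> * Q i \<omega>"
      by (rule real_cond_exp_F_meas[OF int_HQ]) (use H(1) Q(1) in measurable)
    ultimately show ?thesis
      using cond_exp_Y[of i] by eventually_elim (simp add: right_diff_distrib)
  qed
  have "AE \<omega> in M. real_cond_exp M F (\<lambda>\<omega>. \<Sum>i\<in>I. H i \<omega> * (Y i \<omega> - Q i \<omega>)) \<omega>
      = (\<Sum>i\<in>I. real_cond_exp M F (\<lambda>\<omega>. H i \<omega> * (Y i \<omega> - Q i \<omega>)) \<omega>)"
    using int_HY int_HQ by (intro real_cond_exp_sum) (simp add: right_diff_distrib)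
  moreover have "AE \<omega> in M. \<forall>i\<in>I. real_cond_exp M F (\<lambda>\<omega>. H i \<omega> * (Y i \<omega> - Q i \<omega>)) \<omega> = 0"
    using summand \<open>finite I\<close> by (simp add: AE_finite_all)
  ultimately show ?thesis
    by eventually_elim simp
qed

lemma space_filt [simp]: "space (filt M X rw k) = space M"
  by (simp add: filt_def space_measure_of_conv)

lemma sets_filt:
  "sets (filt M X rw k) = sigma_sets (space M)
     ({X i -` A \<inter> space M | i A. i \<le> k} \<union>
      {rw i -` B \<inter> space M | i B. 1 \<le> i \<and> i \<le> k \<and> B \<in> sets borel})"
  unfolding filt_def by (rule sets_measure_of) auto

lemma measurable_filt_X: "i \<le> k \<Longrightarrow> X i \<in> measurable (filt M X rw k) (count_space UNIV)"
  unfolding measurable_def space_filt sets_filt by (clarsimp, rule sigma_sets.Basic, blast)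

lemma borel_measurable_filt_rw: "1 \<le> i \<Longrightarrow> i \<le> k \<Longrightarrow> rw i \<in> borel_measurable (filt M X rw k)"
  unfolding measurable_def space_filt sets_filt by (clarsimp, rule sigma_sets.Basic, blast)

lemma subalgebra_filt:
  assumes "\<And>i. X i \<in> measurable M (count_space UNIV)" and "\<And>i. rw i \<in> borel_measurable M"
  shows "subalgebra M (filt M X rw k)"
  unfolding subalgebra_def sets_filt
  using assms by (auto intro!: sets.sigma_sets_subset measurable_sets)

lemma measurable_count_space_comp:
  "g \<in> measurable N (count_space UNIV) \<Longrightarrow> (\<lambda>\<omega>. h (g \<omega>)) \<in> measurable N (count_space UNIV)"
  "g \<in> measurable N (count_space UNIV) \<Longrightarrow> (\<lambda>\<omega>. h' (g \<omega>)) \<in> borel_measurable N"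
  by (auto intro: measurable_compose[of g])

lemma borel_measurable_Vth_nth [measurable]:
  assumes "th \<in> borel_measurable N" and "g \<in> measurable N (count_space UNIV)"
  shows "(\<lambda>\<omega>. Vth Phi (th \<omega>) $ g \<omega>) \<in> borel_measurable N"
proof (rule measurable_compose_countable'[OF _ assms(2)])
  show "(\<lambda>\<omega>. Vth Phi (th \<omega>) $ s) \<in> borel_measurable N" for s
    unfolding Vth_def using assms(1) by simp measurable
qed simp

lemma theta_it_Suc:
  "theta_it \<alpha> \<gamma> Phi th0 X rw (Suc k) \<omega> =
     theta_it \<alpha> \<gamma> Phi th0 X rw k \<omega>
     + (\<alpha> * (rw (Suc k) \<omega> + \<gamma> * Vth Phi (theta_it \<alpha> \<gamma> Phi th0 X rw k \<omega>) $ fst (X (Suc k) \<omega>)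
              - Phi $ X k \<omega> \<bullet> theta_it \<alpha> \<gamma> Phi th0 X rw k \<omega>)) *\<^sub>R Phi $ X k \<omega>"
  by (simp add: Vth_def Let_def)

lemma borel_measurable_theta_it:
  assumes "\<And>i. i \<le> k \<Longrightarrow> X i \<in> measurable N (count_space UNIV)"
    and "\<And>i. 1 \<le> i \<Longrightarrow> i \<le> k \<Longrightarrow> rw i \<in> borel_measurable N"
  shows "theta_it \<alpha> \<gamma> Phi th0 X rw k \<in> borel_measurable N"
  using assms
proof (induction k)
  case 0
  show ?case
    unfolding theta_it.simps(1)[abs_def] by simp
next
  case (Suc k)
  have [measurable]: "X k \<in> measurable N (count_space UNIV)" "rw (Suc k) \<in> borel_measurable N"
    "theta_it \<alpha> \<gamma> Phi th0 X rw k \<in> borel_measurable N"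
    using Suc by auto
  have [measurable]: "(\<lambda>\<omega>. fst (X (Suc k) \<omega>)) \<in> measurable N (count_space UNIV)"
    "(\<lambda>\<omega>. Phi $ X k \<omega>) \<in> borel_measurable N"
    using Suc.prems(1)[of "Suc k"] Suc.prems(1)[of k] by (auto intro: measurable_count_space_comp[of "X _"])
  show ?case
    unfolding theta_it_Suc[abs_def] by measurable
qed

lemma finite_range_norm_bound:
  fixes f :: "'a::finite \<Rightarrow> 'b::real_normed_vector"
  obtains K where "0 < K" "\<And>x. norm (f x) \<le> K"
proof -
  have "bounded (range f)"
    by (rule finite_imp_bounded) simp
  then show ?thesis
    unfolding bounded_pos using that by blast
qed

lemma abs_Vth_nth_le:
  assumes "\<And>j. norm (Phi $ j) \<le> C"
  shows "\<bar>Vth Phi th $ s\<bar> \<le> C * norm th"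
proof -
  have "Max (range (\<lambda>a. Phi $ (s,a) \<bullet> th)) \<in> range (\<lambda>a. Phi $ (s,a) \<bullet> th)"
    by (rule Max_in) simp_all
  then obtain a where "Max (range (\<lambda>a. Phi $ (s,a) \<bullet> th)) = Phi $ (s,a) \<bullet> th"
    by blast
  then have "Vth Phi th $ s = Phi $ (s,a) \<bullet> th"
    by (simp add: Vth_def)
  also have "\<bar>\<dots>\<bar> \<le> norm (Phi $ (s,a)) * norm th"
    by (rule Cauchy_Schwarz_ineq2)
  also have "\<dots> \<le> C * norm th"
    by (simp add: assms mult_right_mono)
  finally show ?thesis .
qed

lemma theta_it_bounded:
  fixes Phi :: "real^'d::finite^('s::finite \<times> 'u::finite)"
  assumes rw_def: "\<And>k \<omega>. \<omega> \<in> space M \<Longrightarrow> rw (Suc k) \<omega> = r (fst (X k \<omega>)) (snd (X k \<omega>)) (fst (X (Suc k) \<omega>))"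
  shows "\<exists>B. \<forall>\<omega>\<in>space M. norm (theta_it \<alpha> \<gamma> Phi th0 X rw k \<omega>) \<le> B"
proof (induction k)
  case 0
  show ?case by auto
next
  case (Suc k)
  obtain B where B: "\<And>\<omega>. \<omega> \<in> space M \<Longrightarrow> norm (theta_it \<alpha> \<gamma> Phi th0 X rw k \<omega>) \<le> B"
    using Suc by blast
  obtain C where "0 < C" and C: "\<And>j. norm (Phi $ j) \<le> C"
    using finite_range_norm_bound by blast
  obtain Rm where Rm: "\<And>s a s'. \<bar>r s a s'\<bar> \<le> Rm"
    using finite_range_norm_bound[of "\<lambda>(s,a,s'). r s a s'"] by (metis case_prod_conv real_norm_def)
  have "norm (theta_it \<alpha> \<gamma> Phi th0 X rw (Suc k) \<omega>) \<le> B + \<bar>\<alpha>\<bar> * (Rm + \<bar>\<gamma>\<bar> * (C * B) + C * B) * C"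
    if \<omega>: "\<omega> \<in> space M" for \<omega>
  proof -
    define th where "th = theta_it \<alpha> \<gamma> Phi th0 X rw k \<omega>"
    define c where "c = rw (Suc k) \<omega> + \<gamma> * Vth Phi th $ fst (X (Suc k) \<omega>) - Phi $ X k \<omega> \<bullet> th"
    have th: "norm th \<le> B"
      using B[OF \<omega>] by (simp add: th_def)
    have "\<bar>\<gamma> * Vth Phi th $ fst (X (Suc k) \<omega>)\<bar> \<le> \<bar>\<gamma>\<bar> * (C * B)"
      unfolding abs_mult using order_trans[OF abs_Vth_nth_le[OF C] mult_left_mono[OF th]] \<open>0 < C\<close>
      by (intro mult_left_mono) auto
    moreover have "\<bar>Phi $ X k \<omega> \<bullet> th\<bar> \<le> C * B"
      using C th \<open>0 < C\<close> by (intro order_trans[OF Cauchy_Schwarz_ineq2] mult_mono) auto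
    moreover have "\<bar>rw (Suc k) \<omega>\<bar> \<le> Rm"
      using rw_def[OF \<omega>] Rm by simp
    ultimately have "\<bar>c\<bar> \<le> Rm + \<bar>\<gamma>\<bar> * (C * B) + C * B"
      unfolding c_def by linarith
    then have "\<bar>\<alpha>\<bar> * \<bar>c\<bar> * norm (Phi $ X k \<omega>) \<le> \<bar>\<alpha>\<bar> * (Rm + \<bar>\<gamma>\<bar> * (C * B) + C * B) * C"
      using C by (intro mult_mono mult_left_mono) auto
    moreover have "norm (theta_it \<alpha> \<gamma> Phi th0 X rw (Suc k) \<omega>) \<le> norm th + \<bar>\<alpha>\<bar> * \<bar>c\<bar> * norm (Phi $ X k \<omega>)"
      unfolding theta_it_Suc th_def[symmetric] c_def[symmetric]
      by (rule order_trans[OF norm_triangle_ineq]) (simp add: abs_mult)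
    ultimately show ?thesis
      using th by linarith
  qed
  then show ?case
    by blast
qed

lemma deltaB_Rvec_nth:
  "deltaB (Rvec P r) P \<gamma> Phi th $ x
     = (\<Sum>s'\<in>UNIV. P $ x $ s' * (r (fst x) (snd x) s' + \<gamma> * Vth Phi th $ s')) - Phi $ x \<bullet> th"
  by (simp add: deltaB_def Rvec_def matrix_vector_mult_def distrib_left sum.distrib
      sum_distrib_left mult.left_commute inner_vec_def)

lemma xi_noise_nth_eq:
  assumes "rw (Suc k) \<omega> = r (fst (X k \<omega>)) (snd (X k \<omega>)) (fst (X (Suc k) \<omega>))"
  shows "xi_noise (Rvec P r) P \<alpha> \<gamma> Phi th0 X rw k \<omega> $ i =
    (\<Sum>s'\<in>UNIV. Phi $ X k \<omega> $ i
        * (r (fst (X k \<omega>)) (snd (X k \<omega>)) s' + \<gamma> * Vth Phi (theta_it \<alpha> \<gamma> Phi th0 X rw k \<omega>) $ s')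
        * (of_bool (fst (X (Suc k) \<omega>) = s') - P $ X k \<omega> $ s'))"
proof -
  define h where "h s' = r (fst (X k \<omega>)) (snd (X k \<omega>)) s' + \<gamma> * Vth Phi (theta_it \<alpha> \<gamma> Phi th0 X rw k \<omega>) $ s'" for s'
  have "xi_noise (Rvec P r) P \<alpha> \<gamma> Phi th0 X rw k \<omega> $ i
      = Phi $ X k \<omega> $ i * (h (fst (X (Suc k) \<omega>)) - (\<Sum>s'\<in>UNIV. P $ X k \<omega> $ s' * h s'))"
    by (simp add: xi_noise_def Let_def deltaB_Rvec_nth assms h_def Vth_def algebra_simps)
  also have "\<dots> = (\<Sum>s'\<in>UNIV. Phi $ X k \<omega> $ i * h s' * (of_bool (fst (X (Suc k) \<omega>) = s') - P $ X k \<omega> $ s'))"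
    by (simp add: right_diff_distrib sum_subtractf sum_distrib_left mult_ac
        of_bool_def if_distrib[of "\<lambda>x. _ * x"] cong: if_cong)
  finally show ?thesis
    by (simp add: h_def)
qed

lemma xi_noise_coefficient_bounded:
  fixes Phi :: "real^'d::finite^('s::finite \<times> 'u::finite)"
  assumes rw_def: "\<And>k \<omega>. \<omega> \<in> space M \<Longrightarrow> rw (Suc k) \<omega> = r (fst (X k \<omega>)) (snd (X k \<omega>)) (fst (X (Suc k) \<omega>))"
  shows "\<exists>K. \<forall>\<omega>\<in>space M. \<forall>s'. \<bar>Phi $ X k \<omega> $ i
     * (r (fst (X k \<omega>)) (snd (X k \<omega>)) s' + \<gamma> * Vth Phi (theta_it \<alpha> \<gamma> Phi th0 X rw k \<omega>) $ s')\<bar> \<le> K"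
proof -
  obtain B where B: "\<And>\<omega>. \<omega> \<in> space M \<Longrightarrow> norm (theta_it \<alpha> \<gamma> Phi th0 X rw k \<omega>) \<le> B"
    using theta_it_bounded[where M=M and rw=rw and r=r and X=X, OF rw_def] by blast
  obtain C where "0 < C" and C: "\<And>j. norm (Phi $ j) \<le> C"
    using finite_range_norm_bound by blast
  obtain Rm where Rm: "\<And>s a s'. \<bar>r s a s'\<bar> \<le> Rm"
    using finite_range_norm_bound[of "\<lambda>(s,a,s'). r s a s'"] by (metis case_prod_conv real_norm_def)
  have "\<bar>Phi $ X k \<omega> $ i * (r (fst (X k \<omega>)) (snd (X k \<omega>)) s' + \<gamma> * Vth Phi (theta_it \<alpha> \<gamma> Phi th0 X rw k \<omega>) $ s')\<bar>
      \<le> C * (Rm + \<bar>\<gamma>\<bar> * (C * B))" if "\<omega> \<in> space M" for \<omega> s'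
  proof -
    have "\<bar>Phi $ X k \<omega> $ i\<bar> \<le> C"
      using order_trans[OF component_le_norm_cart C] by simp
    moreover have "\<bar>Vth Phi (theta_it \<alpha> \<gamma> Phi th0 X rw k \<omega>) $ s'\<bar> \<le> C * B"
      using order_trans[OF abs_Vth_nth_le[OF C] mult_left_mono[OF B[OF that]]] \<open>0 < C\<close> by simp
    then have "\<bar>r (fst (X k \<omega>)) (snd (X k \<omega>)) s' + \<gamma> * Vth Phi (theta_it \<alpha> \<gamma> Phi th0 X rw k \<omega>) $ s'\<bar>
        \<le> Rm + \<bar>\<gamma>\<bar> * (C * B)"
      using Rm[of "fst (X k \<omega>)" "snd (X k \<omega>)" s'] mult_left_mono[of _ _ "\<bar>\<gamma>\<bar>"]
      by (auto simp: abs_mult intro!: order_trans[OF abs_triangle_ineq] add_mono)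
    ultimately show ?thesis
      unfolding abs_mult by (intro mult_mono) auto
  qed
  then show ?thesis
    by blast
qed

lemma real_cond_exp_xi_noise_nth:
  fixes Phi :: "real^'d::finite^('s::finite \<times> 'u::finite)"
  assumes "prob_space M"
    and X_meas: "\<And>k. X k \<in> measurable M (count_space UNIV)"
    and rw_meas: "\<And>k. rw k \<in> borel_measurable M"
    and rw_def: "\<And>k \<omega>. \<omega> \<in> space M \<Longrightarrow> rw (Suc k) \<omega> = r (fst (X k \<omega>)) (snd (X k \<omega>)) (fst (X (Suc k) \<omega>))"
    and trans_law: "\<And>s'. AE \<omega> in M.
        real_cond_exp M (filt M X rw k) (indicator {\<omega>\<in>space M. fst (X (Suc k) \<omega>) = s'}) \<omega>
          = P $ X k \<omega> $ s'"
  shows "AE \<omega> in M.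
    real_cond_exp M (filt M X rw k) (\<lambda>\<omega>. xi_noise (Rvec P r) P \<alpha> \<gamma> Phi th0 X rw k \<omega> $ i) \<omega> = 0"
proof -
  interpret F: finite_measure_subalgebra M "filt M X rw k"
    using assms(1) subalgebra_filt[OF X_meas rw_meas]
    by (intro finite_measure_subalgebra.intro finite_measure_subalgebra_axioms.intro)
      (auto simp: prob_space_def)
  define th where "th = theta_it \<alpha> \<gamma> Phi th0 X rw k"
  define H where "H s' \<omega> = Phi $ X k \<omega> $ i * (r (fst (X k \<omega>)) (snd (X k \<omega>)) s' + \<gamma> * Vth Phi (th \<omega>) $ s')"
    for s' \<omega>
  define Y :: "'s \<Rightarrow> _ \<Rightarrow> real" where "Y s' = indicator {\<omega>\<in>space M. fst (X (Suc k) \<omega>) = s'}" for s'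
  define Q where "Q s' \<omega> = P $ X k \<omega> $ s'" for s' \<omega>
  have Xk: "X k \<in> measurable (filt M X rw k) (count_space UNIV)"
    by (rule measurable_filt_X) simp
  have [measurable]: "th \<in> borel_measurable (filt M X rw k)"
    unfolding th_def by (intro borel_measurable_theta_it measurable_filt_X borel_measurable_filt_rw)
  have [measurable]: "(\<lambda>\<omega>. Phi $ X k \<omega> $ i) \<in> borel_measurable (filt M X rw k)"
    "(\<lambda>\<omega>. r (fst (X k \<omega>)) (snd (X k \<omega>)) s') \<in> borel_measurable (filt M X rw k)"
    "(\<lambda>\<omega>. P $ X k \<omega> $ s') \<in> borel_measurable (filt M X rw k)" for s'
    using Xk by (auto intro: measurable_count_space_comp)
  have [measurable]: "(\<lambda>\<omega>. fst (X (Suc k) \<omega>)) \<in> measurable M (count_space UNIV)"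
    using X_meas by (rule measurable_count_space_comp)
  obtain KH where H_bound: "\<And>s' \<omega>. \<omega> \<in> space M \<Longrightarrow> \<bar>H s' \<omega>\<bar> \<le> KH"
    using xi_noise_coefficient_bounded[where M=M and rw=rw and r=r and X=X, OF rw_def]
    unfolding H_def th_def by blast
  obtain Pm where Pm: "\<And>j s'. \<bar>P $ j $ s'\<bar> \<le> Pm"
    using finite_range_norm_bound[of "\<lambda>(j,s'). P $ j $ s'"] by (metis case_prod_conv real_norm_def)
  have xi_eq: "xi_noise (Rvec P r) P \<alpha> \<gamma> Phi th0 X rw k \<omega> $ i = (\<Sum>s'\<in>UNIV. H s' \<omega> * (Y s' \<omega> - Q s' \<omega>))"
    if "\<omega> \<in> space M" for \<omega>
    using that
    by (simp add: xi_noise_nth_eq[where rw=rw and r=r and X=X, OF rw_def[OF that]]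
        H_def Y_def Q_def th_def indicator_def)
  have H_F: "H s' \<in> borel_measurable (filt M X rw k)" and Q_F: "Q s' \<in> borel_measurable (filt M X rw k)"
    and Y_M: "Y s' \<in> borel_measurable M" for s'
    unfolding H_def Q_def Y_def by measurable
  have [measurable]: "H s' \<in> borel_measurable M" "Q s' \<in> borel_measurable M" "Y s' \<in> borel_measurable M" for s'
    using H_F Q_F Y_M measurable_from_subalg[OF F.subalg] by blast+
  have sum_meas: "(\<lambda>\<omega>. \<Sum>s'\<in>UNIV. H s' \<omega> * (Y s' \<omega> - Q s' \<omega>)) \<in> borel_measurable M"
    by measurable
  have "AE \<omega> in M.
      real_cond_exp M (filt M X rw k) (\<lambda>\<omega>. xi_noise (Rvec P r) P \<alpha> \<gamma> Phi th0 X rw k \<omega> $ i) \<omega>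
      = real_cond_exp M (filt M X rw k) (\<lambda>\<omega>. \<Sum>s'\<in>UNIV. H s' \<omega> * (Y s' \<omega> - Q s' \<omega>)) \<omega>"
    using xi_eq sum_meas measurable_cong[of M _ _ borel, OF xi_eq]
    by (intro F.real_cond_exp_cong AE_I2) auto
  moreover have "AE \<omega> in M. real_cond_exp M (filt M X rw k) (\<lambda>\<omega>. \<Sum>s'\<in>UNIV. H s' \<omega> * (Y s' \<omega> - Q s' \<omega>)) \<omega> = 0"
  proof (rule F.real_cond_exp_centered_sum[where KY=1 and KQ=Pm])
    show "AE \<omega> in M. real_cond_exp M (filt M X rw k) (Y s') \<omega> = Q s' \<omega>" for s'
      using trans_law unfolding Y_def Q_def .
  qed (use H_F Q_F Y_M H_bound Pm in \<open>auto simp: Y_def Q_def\<close>)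
  ultimately show ?thesis
    by eventually_elim simp
qed

theorem proposition3:
  fixes M :: "'w measure"
    and P :: "real^'s::finite^('s \<times> 'u::finite)"
    and r :: "'s \<Rightarrow> 'u \<Rightarrow> 's \<Rightarrow> real"
    and \<gamma> \<alpha> :: real
    and Phi :: "real^'d::finite^('s \<times> 'u)"
    and beh :: "'s \<Rightarrow> 'u \<Rightarrow> real"
    and d :: "real^('s \<times> 'u)"
    and X :: "nat \<Rightarrow> 'w \<Rightarrow> 's \<times> 'u"
    and rw :: "nat \<Rightarrow> 'w \<Rightarrow> real"
    and th0 thstar :: "real^'d"
  assumes prob: "prob_space M"
    and P_nonneg: "\<forall>i s'. 0 \<le> P $ i $ s'"
    and P_stoch: "\<forall>i. (\<Sum>s'\<in>UNIV. P $ i $ s') = 1"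
    and gamma: "0 < \<gamma>" "\<gamma> < 1"
    and alpha: "0 < \<alpha>" "\<alpha> < 1"
    and Phi_rank: "rank Phi = CARD('d)"
    and beh_stoch: "stoch_policy beh"
    and X_meas: "\<forall>k. X k \<in> measurable M (count_space UNIV)"
    and rw_meas: "\<forall>k. rw k \<in> borel_measurable M"
    and rw_def: "\<forall>k. \<forall>\<omega>\<in>space M. rw (Suc k) \<omega> = r (fst (X k \<omega>)) (snd (X k \<omega>)) (fst (X (Suc k) \<omega>))"
    and trans_law: "\<forall>k s'. AE \<omega> in M.
        real_cond_exp M (filt M X rw k) (indicator {\<omega>\<in>space M. fst (X (Suc k) \<omega>) = s'}) \<omega>
          = P $ X k \<omega> $ s'"
    and act_law: "\<forall>k a'. AE \<omega> in M.
        real_cond_exp M (filt_next M X rw k) (indicator {\<omega>\<in>space M. snd (X (Suc k) \<omega>) = a'}) \<omega>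
          = beh (fst (X (Suc k) \<omega>)) a'"
    and d_pos: "\<forall>i. 0 < d $ i"
    and d_sum: "(\<Sum>i\<in>UNIV. d $ i) = 1"
    and d_stat: "\<forall>s' a'. (\<Sum>(s,a)\<in>UNIV. d $ (s,a) * P $ (s,a) $ s' * beh s' a') = d $ (s',a')"
    and rho: "rho_dir \<alpha> \<gamma> Phi d P < 1"
    and fixpt: "gB (Rvec P r) P \<gamma> Phi d thstar = 0"
  shows "\<exists>mu :: nat \<Rightarrow> 'w \<Rightarrow> 's \<Rightarrow> 'u \<Rightarrow> real.
     (\<forall>k s a. (\<lambda>\<omega>. mu k \<omega> s a) \<in> borel_measurable (filt M X rw k)) \<and>
     (\<forall>k. \<forall>\<omega>\<in>space M. stoch_policy (mu k \<omega>)) \<and>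
     (\<forall>k. \<forall>\<omega>\<in>space M.
        theta_it \<alpha> \<gamma> Phi th0 X rw (Suc k) \<omega> - thstar
          = Amu \<alpha> \<gamma> Phi d P (mu k \<omega>) *v (theta_it \<alpha> \<gamma> Phi th0 X rw k \<omega> - thstar)
            + \<alpha> *\<^sub>R b_bias (Rvec P r) P \<alpha> \<gamma> Phi d th0 X rw k \<omega>
            + \<alpha> *\<^sub>R xi_noise (Rvec P r) P \<alpha> \<gamma> Phi th0 X rw k \<omega>) \<and>
     (\<forall>k i. AE \<omega> in M.
        real_cond_exp M (filt M X rw k) (\<lambda>\<omega>. xi_noise (Rvec P r) P \<alpha> \<gamma> Phi th0 X rw k \<omega> $ i) \<omega> = 0) \<and>
     (\<forall>k. \<forall>\<omega>\<in>space M.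
        b_bias (Rvec P r) P \<alpha> \<gamma> Phi d th0 X rw k \<omega>
          = transpose Phi *v ((outerE (X k \<omega>) - diagM d) *v
              (Rvec P r + \<gamma> *\<^sub>R (P *v Vth Phi thstar) - Phi *v thstar
               + (\<gamma> *\<^sub>R (P ** PiM (mu k \<omega>)) - mat 1) *v (Phi *v (theta_it \<alpha> \<gamma> Phi th0 X rw k \<omega> - thstar)))))"
proof -
  define th where "th k \<omega> = theta_it \<alpha> \<gamma> Phi th0 X rw k \<omega>" for k \<omega>
  define mu where "mu k \<omega> = mean_value_policy Phi thstar (th k \<omega>)" for k \<omega>
  have PiM_mu: "PiM (mu k \<omega>) *v (Phi *v (th k \<omega> - thstar)) = Vth Phi (th k \<omega>) - Vth Phi thstar" for k \<omega>
    unfolding mu_def by (rule PiM_mean_value_policy)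
  have "th k \<in> borel_measurable (filt M X rw k)" for k
    unfolding th_def by (intro borel_measurable_theta_it measurable_filt_X borel_measurable_filt_rw)
  then have "(\<lambda>\<omega>. mu k \<omega> s a) \<in> borel_measurable (filt M X rw k)" for k s a
    unfolding mu_def by measurable
  moreover have "stoch_policy (mu k \<omega>)" for k \<omega>
    unfolding mu_def by (rule stoch_policy_mean_value_policy)
  moreover have "th (Suc k) \<omega> - thstar
      = Amu \<alpha> \<gamma> Phi d P (mu k \<omega>) *v (th k \<omega> - thstar)
        + \<alpha> *\<^sub>R b_bias (Rvec P r) P \<alpha> \<gamma> Phi d th0 X rw k \<omega>
        + \<alpha> *\<^sub>R xi_noise (Rvec P r) P \<alpha> \<gamma> Phi th0 X rw k \<omega>" for k \<omega>
    unfolding b_bias_def xi_noise_def Let_def th_def theta_it.simps(2)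
    by (rule qlearning_step_decomposition[OF PiM_mu[unfolded th_def] fixpt])
  moreover have "AE \<omega> in M.
      real_cond_exp M (filt M X rw k) (\<lambda>\<omega>. xi_noise (Rvec P r) P \<alpha> \<gamma> Phi th0 X rw k \<omega> $ i) \<omega> = 0"
    for k i
    using prob X_meas rw_meas rw_def trans_law by (intro real_cond_exp_xi_noise_nth) auto
  moreover have "b_bias (Rvec P r) P \<alpha> \<gamma> Phi d th0 X rw k \<omega>
      = transpose Phi *v ((outerE (X k \<omega>) - diagM d) *v
          (Rvec P r + \<gamma> *\<^sub>R (P *v Vth Phi thstar) - Phi *v thstar
           + (\<gamma> *\<^sub>R (P ** PiM (mu k \<omega>)) - mat 1) *v (Phi *v (th k \<omega> - thstar))))" for k \<omega>
    using deltaB_linearization[OF PiM_mu, of "Rvec P r"]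
    by (simp add: b_bias_def th_def deltaB_def[of _ _ _ _ thstar])
  ultimately show ?thesis
    unfolding th_def by blast
qed

end
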